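(* Let $n=2k+1$ with $k\ge 1$. Then $\{d_i : i=1,2,\ldots,n\}$ is a strong resolving set of $S_n$.
   Context: For $n\ge 3$, $S_n$ is the graph with vertex set $\{a_i,b_i,c_i,d_i : 1\le i\le n\}$ and edge set $\{a_ia_{i+1}, b_ib_{i+1}, c_ic_{i+1}, d_id_{i+1}, a_{i+1}b_i, a_ib_i, b_ic_i, c_id_i : 1\le i\le n\}$, indices taken modulo $n$. $d$ is the graph distance. A vertex $w$ strongly resolves distinct vertices $u,v$ if $d(v,w)=d(v,u)+d(u,w)$ or $d(u,w)=d(u,v)+d(v,w)$. A set $S$ is a strong resolving set if every two distinct vertices are strongly resolved by some vertex of $S$. *)

theory Defs
  imports Main
begin

datatype vtx = A nat | B nat | C nat | D nat

definition Sverts :: "nat \<Rightarrow> vtx set" where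
  "Sverts n = {A i | i. i \<in> {1..n}} \<union> {B i | i. i \<in> {1..n}}
            \<union> {C i | i. i \<in> {1..n}} \<union> {D i | i. i \<in> {1..n}}"

definition nxt :: "nat \<Rightarrow> nat \<Rightarrow> nat" where
  "nxt n i = i mod n + 1"

definition Sedges0 :: "nat \<Rightarrow> (vtx \<times> vtx) set" where
  "Sedges0 n = (\<Union>i\<in>{1..n}.
     {(A i, A (nxt n i)), (B i, B (nxt n i)), (C i, C (nxt n i)), (D i, D (nxt n i)),
      (A (nxt n i), B i), (A i, B i), (B i, C i), (C i, D i)})"

definition Sedges :: "nat \<Rightarrow> (vtx \<times> vtx) set" where
  "Sedges n = Sedges0 n \<union> (Sedges0 n)\<inverse>"

definition Sdist :: "nat \<Rightarrow> vtx \<Rightarrow> vtx \<Rightarrow> nat" where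
  "Sdist n u v = (LEAST k. (u, v) \<in> (Sedges n) ^^ k)"

definition strongly_resolves :: "nat \<Rightarrow> vtx \<Rightarrow> vtx \<Rightarrow> vtx \<Rightarrow> bool" where
  "strongly_resolves n w u v \<longleftrightarrow>
     Sdist n v w = Sdist n v u + Sdist n u w \<or> Sdist n u w = Sdist n u v + Sdist n v w"

definition strong_resolving_set :: "nat \<Rightarrow> vtx set \<Rightarrow> bool" where
  "strong_resolving_set n S \<longleftrightarrow> S \<subseteq> Sverts n \<and>
     (\<forall>u\<in>Sverts n. \<forall>v\<in>Sverts n. u \<noteq> v \<longrightarrow> (\<exists>w\<in>S. strongly_resolves n w u v))"

end

theory Submission
  imports Defs
begin

(* dist_D n j is the distance to D_j: a shortest walk from A_i, B_i or C_i moves along its own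
   cycle and descends to the d-cycle in one column, and A_i has the two lower neighbours B_i
   and B_(i-1).  It is a lower bound for walk lengths because it changes by at most one along
   every edge.  So D_j strongly resolves u and v once some walk from v through u to D_j has
   length dist_D n j v.  For u = B_i or C_i the vertex D_i always works: walk from v along its
   cycle to column i and go down.  For u = A_i, v = A_m the vertex D_i works unless B_(m-1) is
   strictly nearer to column i than B_m; then D_(i-1) works, and this is where n is odd. *)

definition cyc_fwd :: "nat \<Rightarrow> nat \<Rightarrow> nat \<Rightarrow> nat" where
  "cyc_fwd n i j = (if i \<le> j then j - i else n + j - i)"

definition cyc_dist :: "nat \<Rightarrow> nat \<Rightarrow> nat \<Rightarrow> nat" where
  "cyc_dist n i j = min (cyc_fwd n i j) (cyc_fwd n j i)"

definition prv :: "nat \<Rightarrow> nat \<Rightarrow> nat" where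
  "prv n i = (if i = 1 then n else i - 1)"

lemma nxt_eq: "i \<in> {1..n} \<Longrightarrow> nxt n i = (if i = n then 1 else Suc i)"
  unfolding nxt_def by auto

lemma nxt_in_range: "i \<in> {1..n} \<Longrightarrow> nxt n i \<in> {1..n}"
  by (simp add: nxt_eq)

lemma prv_in_range: "i \<in> {1..n} \<Longrightarrow> prv n i \<in> {1..n}"
  unfolding prv_def by auto

lemma nxt_prv: "i \<in> {1..n} \<Longrightarrow> nxt n (prv n i) = i"
  unfolding prv_def nxt_def by auto

lemma prv_nxt: "i \<in> {1..n} \<Longrightarrow> prv n (nxt n i) = i"
  by (simp add: prv_def nxt_eq)

lemma cyc_dist_self [simp]: "cyc_dist n i i = 0"
  by (simp add: cyc_dist_def cyc_fwd_def)

lemma cyc_dist_commute: "cyc_dist n i j = cyc_dist n j i"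
  unfolding cyc_dist_def by simp

lemma cyc_fwd_eq_0_iff: "i \<in> {1..n} \<Longrightarrow> j \<in> {1..n} \<Longrightarrow> cyc_fwd n i j = 0 \<longleftrightarrow> i = j"
  unfolding cyc_fwd_def by auto

lemma cyc_fwd_nxt: "i \<in> {1..n} \<Longrightarrow> j \<in> {1..n} \<Longrightarrow> cyc_fwd n i j = Suc d \<Longrightarrow>
    cyc_fwd n (nxt n i) j = d"
  unfolding cyc_fwd_def by (cases "i = n") (auto simp: nxt_eq split: if_splits)

lemma cyc_dist_nxt_le: "i \<in> {1..n} \<Longrightarrow> j \<in> {1..n} \<Longrightarrow>
    cyc_dist n (nxt n i) j \<le> Suc (cyc_dist n i j) \<and>
    cyc_dist n i j \<le> Suc (cyc_dist n (nxt n i) j)"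
  unfolding cyc_dist_def cyc_fwd_def
  by (cases "i = n"; cases "i \<le> j") (auto simp: nxt_eq min_def)

lemma cyc_dist_eq_min_fwd: "i \<in> {1..n} \<Longrightarrow> j \<in> {1..n} \<Longrightarrow>
    cyc_dist n i j = min (cyc_fwd n i j) (n - cyc_fwd n i j)"
  unfolding cyc_dist_def cyc_fwd_def by auto

lemma cyc_fwd_prv_right: "i \<in> {1..n} \<Longrightarrow> j \<in> {1..n} \<Longrightarrow> i \<noteq> j \<Longrightarrow>
    cyc_fwd n i (prv n j) = cyc_fwd n i j - 1"
  unfolding cyc_fwd_def prv_def by auto

lemma cyc_fwd_prv_left: "i \<in> {1..n} \<Longrightarrow> j \<in> {1..n} \<Longrightarrow> Suc (cyc_fwd n i j) < n \<Longrightarrow>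
    cyc_fwd n (prv n i) j = Suc (cyc_fwd n i j)"
  unfolding cyc_fwd_def prv_def by auto

lemma cyc_fwd_prv_prv: "i \<in> {1..n} \<Longrightarrow> j \<in> {1..n} \<Longrightarrow>
    cyc_fwd n (prv n i) (prv n j) = cyc_fwd n i j"
  unfolding cyc_fwd_def prv_def by auto

lemma cyc_dist_prv_prv: "i \<in> {1..n} \<Longrightarrow> j \<in> {1..n} \<Longrightarrow>
    cyc_dist n (prv n i) (prv n j) = cyc_dist n i j"
  by (simp add: cyc_dist_def cyc_fwd_prv_prv)

lemma odd_cyc_dist_prv:
  assumes i: "i \<in> {1..n}" and m: "m \<in> {1..n}" and "odd n"
    and closer: "cyc_dist n (prv n m) i < cyc_dist n m i"
  shows "cyc_dist n m i \<le> cyc_dist n m (prv n i)"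
proof -
  obtain k where n: "n = 2 * k + 1" using \<open>odd n\<close> oddE by blast
  have "i \<noteq> m" using closer by auto
  define d where "d = cyc_fwd n i m"
  have dist_m: "cyc_dist n m i = min d (n - d)"
    using cyc_dist_eq_min_fwd[OF i m] by (simp add: cyc_dist_commute d_def)
  have "cyc_dist n (prv n m) i = min (d - 1) (n - (d - 1))"
    using cyc_dist_eq_min_fwd[OF i prv_in_range[OF m]] cyc_fwd_prv_right[OF i m \<open>i \<noteq> m\<close>]
    by (simp add: cyc_dist_commute d_def)
  \<comment> \<open>For even n the case d = n/2 would survive here, and the claim fails for it.\<close>
  then have "0 < d" "d \<le> k" using closer dist_m n by (simp_all add: min_def split: if_splits)
  then have "cyc_fwd n (prv n i) m = Suc d"
    using cyc_fwd_prv_left[OF i m] n by (simp add: d_def)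
  then have "cyc_dist n m (prv n i) = min (Suc d) (n - Suc d)"
    using cyc_dist_eq_min_fwd[OF prv_in_range[OF i] m] by (simp add: cyc_dist_commute)
  with \<open>d \<le> k\<close> n dist_m show ?thesis by simp
qed

lemma relpow_sym:
  assumes "sym R" and "(x, y) \<in> R ^^ k"
  shows "(y, x) \<in> R ^^ k"
  using assms(2)
proof (induction k arbitrary: y)
  case (Suc k)
  then obtain z where "(x, z) \<in> R ^^ k" "(z, y) \<in> R" by auto
  then show ?case using Suc.IH \<open>sym R\<close> by (meson relpow_Suc_I2 symD)
qed simp

lemma relpow_potential_le:
  assumes step: "\<And>x y. (x, y) \<in> R \<Longrightarrow> f x \<le> Suc (f y)" and "(x, z) \<in> R ^^ k"
  shows "f x \<le> f z + k"
  using assms(2)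
proof (induction k arbitrary: x)
  case (Suc k)
  then obtain y where "(x, y) \<in> R" "(y, z) \<in> R ^^ k" by (meson relpow_Suc_D2)
  then show ?case using Suc.IH step by fastforce
qed simp

lemma Sdist_le: "(u, v) \<in> Sedges n ^^ k \<Longrightarrow> Sdist n u v \<le> k"
  unfolding Sdist_def by (rule Least_le)

lemma Sdist_walk: "(u, v) \<in> Sedges n ^^ k \<Longrightarrow> (u, v) \<in> Sedges n ^^ Sdist n u v"
  unfolding Sdist_def by (rule LeastI)

lemma Sdist_self [simp]: "Sdist n u u = 0"
  using Sdist_le[where k = 0] by simp

lemma Sdist_triangle:
  assumes "(u, v) \<in> Sedges n ^^ k" and "(v, w) \<in> Sedges n ^^ l"
  shows "Sdist n u w \<le> Sdist n u v + Sdist n v w"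
  using relpow_trans[OF Sdist_walk[OF assms(1)] Sdist_walk[OF assms(2)]] by (rule Sdist_le)

lemma sym_Sedges: "sym (Sedges n)"
  unfolding Sedges_def by (rule sym_Un_converse)

lemma Sedges_I:
  assumes "i \<in> {1..n}"
    and "p \<in> {(A i, A (nxt n i)), (B i, B (nxt n i)), (C i, C (nxt n i)), (D i, D (nxt n i)),
      (A (nxt n i), B i), (A i, B i), (B i, C i), (C i, D i)}"
  shows "p \<in> Sedges n"
  using assms unfolding Sedges_def Sedges0_def by blast

lemma edge_A_B: "i \<in> {1..n} \<Longrightarrow> (A i, B i) \<in> Sedges n"
  by (rule Sedges_I) auto

lemma edge_A_B_prv: "i \<in> {1..n} \<Longrightarrow> (A i, B (prv n i)) \<in> Sedges n"
  using Sedges_I[OF prv_in_range, of i n] by (simp add: nxt_prv)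

lemma edge_B_C: "i \<in> {1..n} \<Longrightarrow> (B i, C i) \<in> Sedges n"
  by (rule Sedges_I) auto

lemma edge_C_D: "i \<in> {1..n} \<Longrightarrow> (C i, D i) \<in> Sedges n"
  by (rule Sedges_I) auto

lemma cycle_walk:
  assumes cycle: "\<And>i. i \<in> {1..n} \<Longrightarrow> (f i, f (nxt n i)) \<in> Sedges n"
    and i: "i \<in> {1..n}" and j: "j \<in> {1..n}"
  shows "(f i, f j) \<in> Sedges n ^^ cyc_dist n i j"
proof -
  have fwd: "(f i', f j') \<in> Sedges n ^^ cyc_fwd n i' j'"
    if "i' \<in> {1..n}" "j' \<in> {1..n}" for i' j'
    using that
  proof (induction "cyc_fwd n i' j'" arbitrary: i')
    case 0
    then show ?case using cyc_fwd_eq_0_iff by (metis relpow_0_I)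
  next
    case (Suc d)
    then have "(f (nxt n i'), f j') \<in> Sedges n ^^ d"
      using cyc_fwd_nxt nxt_in_range by metis
    then show ?case using relpow_Suc_I2[OF cycle] Suc by metis
  qed
  show ?thesis
    using fwd[OF i j] relpow_sym[OF sym_Sedges fwd[OF j i]] by (simp add: cyc_dist_def min_def)
qed

lemma walk_A: "i \<in> {1..n} \<Longrightarrow> j \<in> {1..n} \<Longrightarrow> (A i, A j) \<in> Sedges n ^^ cyc_dist n i j"
  by (rule cycle_walk) (auto intro: Sedges_I)

lemma walk_B: "i \<in> {1..n} \<Longrightarrow> j \<in> {1..n} \<Longrightarrow> (B i, B j) \<in> Sedges n ^^ cyc_dist n i j"
  by (rule cycle_walk) (auto intro: Sedges_I)

lemma walk_C: "i \<in> {1..n} \<Longrightarrow> j \<in> {1..n} \<Longrightarrow> (C i, C j) \<in> Sedges n ^^ cyc_dist n i j"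
  by (rule cycle_walk) (auto intro: Sedges_I)

lemma walk_C_D: "i \<in> {1..n} \<Longrightarrow> (C i, D i) \<in> Sedges n ^^ 1"
  using edge_C_D by simp

lemma walk_B_D: "i \<in> {1..n} \<Longrightarrow> (B i, D i) \<in> Sedges n ^^ 2"
  using relpow_Suc_I2[OF edge_B_C walk_C_D] by (simp add: numeral_2_eq_2)

lemma walk_A_D: "i \<in> {1..n} \<Longrightarrow> (A i, D i) \<in> Sedges n ^^ 3"
  using relpow_Suc_I2[OF edge_A_B walk_B_D] by (simp add: numeral_3_eq_3)

lemma walk_A_D_prv: "i \<in> {1..n} \<Longrightarrow> (A i, D (prv n i)) \<in> Sedges n ^^ 3"
  using relpow_Suc_I2[OF edge_A_B_prv walk_B_D[OF prv_in_range]] by (simp add: numeral_3_eq_3)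

fun dist_D :: "nat \<Rightarrow> nat \<Rightarrow> vtx \<Rightarrow> nat" where
  "dist_D n j (D i) = cyc_dist n i j"
| "dist_D n j (C i) = 1 + cyc_dist n i j"
| "dist_D n j (B i) = 2 + cyc_dist n i j"
| "dist_D n j (A i) = 3 + min (cyc_dist n i j) (cyc_dist n (prv n i) j)"

lemma dist_D_Sedges0:
  assumes "(x, y) \<in> Sedges0 n" and j: "j \<in> {1..n}"
  shows "dist_D n j x \<le> Suc (dist_D n j y) \<and> dist_D n j y \<le> Suc (dist_D n j x)"
proof -
  obtain i where i: "i \<in> {1..n}" and "(x, y) \<in> {(A i, A (nxt n i)), (B i, B (nxt n i)),
      (C i, C (nxt n i)), (D i, D (nxt n i)), (A (nxt n i), B i), (A i, B i), (B i, C i),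
      (C i, D i)}"
    using assms(1) unfolding Sedges0_def by blast
  moreover note cyc_dist_nxt_le[OF i j]
  moreover have "cyc_dist n i j \<le> Suc (cyc_dist n (prv n i) j) \<and>
      cyc_dist n (prv n i) j \<le> Suc (cyc_dist n i j)"
    using cyc_dist_nxt_le[OF prv_in_range[OF i] j] by (simp add: nxt_prv[OF i])
  ultimately show ?thesis
    by (auto simp: prv_nxt[OF i] min_def)
qed

lemma dist_D_le_walk:
  assumes "(x, D j) \<in> Sedges n ^^ k" and "j \<in> {1..n}"
  shows "dist_D n j x \<le> k"
proof -
  have "dist_D n j x \<le> dist_D n j (D j) + k"
    by (rule relpow_potential_le[OF _ assms(1)])
       (use dist_D_Sedges0 assms(2) in \<open>auto simp: Sedges_def\<close>)
  then show ?thesis by simp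
qed

lemma strongly_resolves_sym: "strongly_resolves n w u v \<Longrightarrow> strongly_resolves n w v u"
  unfolding strongly_resolves_def by auto

lemma strongly_resolves_self: "strongly_resolves n u u v"
  unfolding strongly_resolves_def by simp

lemma strongly_resolves_via_walks:
  assumes vu: "(v, u) \<in> Sedges n ^^ l" and uw: "(u, D j) \<in> Sedges n ^^ l'"
    and j: "j \<in> {1..n}" and tight: "dist_D n j v = l + l'"
  shows "strongly_resolves n (D j) u v"
proof -
  have "l + l' \<le> Sdist n v (D j)"
    using tight dist_D_le_walk[OF Sdist_walk j] relpow_trans[OF vu uw] by metis
  moreover have "Sdist n v (D j) \<le> Sdist n v u + Sdist n u (D j)"
    using Sdist_triangle[OF vu uw] .
  moreover have "Sdist n v u \<le> l" "Sdist n u (D j) \<le> l'"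
    using Sdist_le vu uw by auto
  ultimately show ?thesis unfolding strongly_resolves_def by linarith
qed

lemma A_B_edge_towards:
  assumes "m \<in> {1..n}"
  obtains m' where "m' \<in> {1..n}" "(A m, B m') \<in> Sedges n"
    "cyc_dist n m' i = min (cyc_dist n m i) (cyc_dist n (prv n m) i)"
proof (cases "cyc_dist n m i \<le> cyc_dist n (prv n m) i")
  case True
  then show ?thesis using that[of m] assms edge_A_B by (simp add: min_def)
next
  case False
  then show ?thesis
    using that[of "prv n m"] prv_in_range[OF assms] edge_A_B_prv[OF assms] by (simp add: min_def)
qed

lemma resolves_C_C:
  assumes i: "i \<in> {1..n}" and m: "m \<in> {1..n}"
  shows "strongly_resolves n (D i) (C i) (C m)"
  using strongly_resolves_via_walks[OF walk_C[OF m i] walk_C_D[OF i] i] by simp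

lemma resolves_C_B:
  assumes i: "i \<in> {1..n}" and m: "m \<in> {1..n}"
  shows "strongly_resolves n (D i) (C i) (B m)"
  using strongly_resolves_via_walks[OF relpow_Suc_I2[OF edge_B_C[OF m] walk_C[OF m i]] walk_C_D[OF i] i]
  by simp

lemma resolves_B_B:
  assumes i: "i \<in> {1..n}" and m: "m \<in> {1..n}"
  shows "strongly_resolves n (D i) (B i) (B m)"
  using strongly_resolves_via_walks[OF walk_B[OF m i] walk_B_D[OF i] i] by simp

lemma resolves_C_A:
  assumes i: "i \<in> {1..n}" and m: "m \<in> {1..n}"
  shows "strongly_resolves n (D i) (C i) (A m)"
proof -
  obtain m' where m': "m' \<in> {1..n}" "(A m, B m') \<in> Sedges n"
    "cyc_dist n m' i = min (cyc_dist n m i) (cyc_dist n (prv n m) i)"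
    using A_B_edge_towards[OF m] .
  show ?thesis
    using strongly_resolves_via_walks[OF
        relpow_Suc_I2[OF m'(2) relpow_Suc_I2[OF edge_B_C[OF m'(1)] walk_C[OF m'(1) i]]]
        walk_C_D[OF i] i]
    by (simp add: m'(3))
qed

lemma resolves_B_A:
  assumes i: "i \<in> {1..n}" and m: "m \<in> {1..n}"
  shows "strongly_resolves n (D i) (B i) (A m)"
proof -
  obtain m' where m': "m' \<in> {1..n}" "(A m, B m') \<in> Sedges n"
    "cyc_dist n m' i = min (cyc_dist n m i) (cyc_dist n (prv n m) i)"
    using A_B_edge_towards[OF m] .
  show ?thesis
    using strongly_resolves_via_walks[OF relpow_Suc_I2[OF m'(2) walk_B[OF m'(1) i]] walk_B_D[OF i] i]
    by (simp add: m'(3))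
qed

lemma resolves_A_A:
  assumes i: "i \<in> {1..n}" and m: "m \<in> {1..n}" and "odd n"
  shows "\<exists>j\<in>{1..n}. strongly_resolves n (D j) (A i) (A m)"
proof (cases "cyc_dist n (prv n m) i < cyc_dist n m i")
  case True
  then have "dist_D n (prv n i) (A m) = cyc_dist n m i + 3"
    using odd_cyc_dist_prv[OF i m \<open>odd n\<close>] cyc_dist_prv_prv[OF m i] by (simp add: min_def)
  then have "strongly_resolves n (D (prv n i)) (A i) (A m)"
    by (intro strongly_resolves_via_walks[OF walk_A[OF m i] walk_A_D_prv[OF i]] prv_in_range[OF i])
  then show ?thesis using prv_in_range[OF i] by blast
next
  case False
  then have "strongly_resolves n (D i) (A i) (A m)"
    by (intro strongly_resolves_via_walks[OF walk_A[OF m i] walk_A_D[OF i]] i) (simp add: min_def)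
  then show ?thesis using i by blast
qed

lemma Sverts_cases:
  assumes "x \<in> Sverts n"
  obtains (A) i where "i \<in> {1..n}" "x = A i" | (B) i where "i \<in> {1..n}" "x = B i"
    | (C) i where "i \<in> {1..n}" "x = C i" | (D) i where "i \<in> {1..n}" "x = D i"
  using assms unfolding Sverts_def by blast

lemma resolved_from_B_C_D:
  assumes i: "i \<in> {1..n}" and x: "x \<in> {B i, C i, D i}" and y: "y \<in> Sverts n"
  shows "\<exists>j\<in>{1..n}. strongly_resolves n (D j) x y"
  using y
proof (cases rule: Sverts_cases)
  case (A m)
  then have "strongly_resolves n (D i) x y"
    using x resolves_B_A[OF i] resolves_C_A[OF i] strongly_resolves_self by auto
  with i show ?thesis by blast
next
  case (B m)
  then have "strongly_resolves n (D i) x y"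
    using x resolves_B_B[OF i] resolves_C_B[OF i] strongly_resolves_self by auto
  with i show ?thesis by blast
next
  case (C m)
  have "strongly_resolves n (D i) x y" if "x \<noteq> B i"
    using that x C resolves_C_C[OF i] strongly_resolves_self by auto
  moreover have "strongly_resolves n (D m) x y" if "x = B i"
    using that C strongly_resolves_sym[OF resolves_C_B[OF _ i]] by simp
  ultimately show ?thesis using i C(1) by blast
next
  case (D m)
  then have "strongly_resolves n (D m) x y"
    using strongly_resolves_sym[OF strongly_resolves_self] by simp
  with D(1) show ?thesis by blast
qed

lemma resolved_by_some_D:
  assumes "odd n" and u: "u \<in> Sverts n" and v: "v \<in> Sverts n"
  shows "\<exists>j\<in>{1..n}. strongly_resolves n (D j) u v"
  using u
proof (cases rule: Sverts_cases)
  case (A i)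
  note u_A = this
  have swap: "\<exists>j\<in>{1..n}. strongly_resolves n (D j) u y"
    if "\<exists>j\<in>{1..n}. strongly_resolves n (D j) y u" for y
    using that strongly_resolves_sym by blast
  from v show ?thesis
  proof (cases rule: Sverts_cases)
    case (A m)
    then show ?thesis using u_A resolves_A_A \<open>odd n\<close> by simp
  qed (rule swap, rule resolved_from_B_C_D[OF _ _ u]; simp)+
qed (rule resolved_from_B_C_D[OF _ _ v]; simp)+

theorem lemma3p10:
  fixes n k :: nat
  assumes "k \<ge> 1" and "n = 2 * k + 1"
  shows "strong_resolving_set n {D i | i. i \<in> {1..n}}"
  unfolding strong_resolving_set_def
proof (intro conjI ballI impI)
  show "{D i | i. i \<in> {1..n}} \<subseteq> Sverts n"
    unfolding Sverts_def by blast
next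
  have "odd n" using assms(2) by simp
  fix u v assume "u \<in> Sverts n" "v \<in> Sverts n"
  then obtain j where "j \<in> {1..n}" "strongly_resolves n (D j) u v"
    using resolved_by_some_D[OF \<open>odd n\<close>] by blast
  then show "\<exists>w\<in>{D i | i. i \<in> {1..n}}. strongly_resolves n w u v" by blast
qed

end
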